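(* Let $h:\mathbb{A}\to\mathbb{A}$ be a monotone continuous function. Then there is a clopen interval $J\subseteq\mathbb{A}$ such that either $h\restriction J$ is constant or $h\restriction J$ is strictly monotone.
   Context: Let $\mathbb{A}_0=\,]0,1]\times\{0\}$, $\mathbb{A}_1=[0,1[\,\times\{1\}$ and $\mathbb{A}=\mathbb{A}_0\cup\mathbb{A}_1$, ordered lexicographically: $\langle a,r\rangle\prec\langle b,s\rangle$ iff $a<b$, or $a=b$ and $r<s$; $\mathbb{A}$ (the double arrow space) carries the order topology. A clopen interval is a nonempty convex subset of $\mathbb{A}$ that is clopen. A (partial) function $f:\mathbb{A}\to\mathbb{A}$ is monotone if it is non-decreasing or non-increasing, and strictly monotone if it is strictly increasing or strictly decreasing. *)

theory Defs
  imports "HOL-Analysis.Analysis"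
begin

text \<open>The double arrow space: points are pairs (a, r) with r a boolean
  (False for 0, True for 1); A0 = ]0,1] x {0}, A1 = [0,1[ x {1}.\<close>

typedef darrow = "{p :: real \<times> bool.
    (\<not> snd p \<and> 0 < fst p \<and> fst p \<le> 1) \<or> (snd p \<and> 0 \<le> fst p \<and> fst p < 1)}"
  by (rule exI[of _ "(1, False)"]) auto

instantiation darrow :: linorder
begin

definition less_darrow :: "darrow \<Rightarrow> darrow \<Rightarrow> bool" where
  "less_darrow x y \<longleftrightarrow> fst (Rep_darrow x) < fst (Rep_darrow y) \<or>
     (fst (Rep_darrow x) = fst (Rep_darrow y) \<and> snd (Rep_darrow x) < snd (Rep_darrow y))"

definition less_eq_darrow :: "darrow \<Rightarrow> darrow \<Rightarrow> bool" where
  "less_eq_darrow x y \<longleftrightarrow> fst (Rep_darrow x) < fst (Rep_darrow y) \<or>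
     (fst (Rep_darrow x) = fst (Rep_darrow y) \<and> snd (Rep_darrow x) < snd (Rep_darrow y)) \<or> x = y"

instance
proof
  fix x y z :: darrow
  have inj: "x = y \<longleftrightarrow> fst (Rep_darrow x) = fst (Rep_darrow y) \<and> snd (Rep_darrow x) = snd (Rep_darrow y)"
    for x y by (simp add: Rep_darrow_inject[symmetric] prod_eq_iff)
  show "(x < y) = (x \<le> y \<and> \<not> y \<le> x)"
    unfolding less_darrow_def less_eq_darrow_def by (auto simp: inj)
  show "x \<le> x" by (simp add: less_eq_darrow_def)
  show "x \<le> y \<Longrightarrow> y \<le> z \<Longrightarrow> x \<le> z"
    unfolding less_eq_darrow_def less_darrow_def by (auto simp: inj)
  show "x \<le> y \<Longrightarrow> y \<le> x \<Longrightarrow> x = y"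
    unfolding less_eq_darrow_def less_darrow_def by (auto simp: inj)
  show "x \<le> y \<or> y \<le> x"
    unfolding less_eq_darrow_def less_darrow_def by (auto simp: inj)
qed

end

instantiation darrow :: linorder_topology
begin

definition open_darrow :: "darrow set \<Rightarrow> bool" where
  "open_darrow = generate_topology (range lessThan \<union> range greaterThan)"

instance by standard (rule open_darrow_def)

end

definition clopen_interval :: "darrow set \<Rightarrow> bool" where
  "clopen_interval J \<longleftrightarrow> J \<noteq> {} \<and>
     (\<forall>x\<in>J. \<forall>z\<in>J. \<forall>y. x \<le> y \<and> y \<le> z \<longrightarrow> y \<in> J) \<and> open J \<and> closed J"

end

theory Submission
  imports Defs
begin

text \<open>If a monotone \<open>h\<close> identifies two points with different real coordinates, it is constant
  on everything between them, in particular on a clopen interval \<open>[(a,1), (b,0)]\<close>. Otherwise the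
  only possible failure of injectivity is \<open>h(a,0) = h(a,1) = p\<close>. One of the rays \<open>[p,\<rightarrow>[\<close> and
  \<open>]\<leftarrow>,p]\<close> is open; its preimage is an open neighbourhood of \<open>(a,0)\<close> or of \<open>(a,1)\<close>, hence contains
  a point \<open>z\<close> strictly on the outer side of the pair, and monotonicity forces \<open>h z = p\<close> with
  \<open>z\<close> of a different real coordinate, which was excluded. So \<open>h\<close> is injective, hence strictly
  monotone on the whole space.\<close>

abbreviation coord :: "darrow \<Rightarrow> real" where "coord x \<equiv> fst (Rep_darrow x)"
abbreviation upper :: "darrow \<Rightarrow> bool" where "upper x \<equiv> snd (Rep_darrow x)"

lemma darrow_cases:
  "(\<not> upper x \<and> 0 < coord x \<and> coord x \<le> 1) \<or> (upper x \<and> 0 \<le> coord x \<and> coord x < 1)"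
  using Rep_darrow[of x] by auto

lemma darrow_eq_iff: "x = y \<longleftrightarrow> coord x = coord y \<and> upper x = upper y"
  by (simp add: Rep_darrow_inject[symmetric] prod_eq_iff)

lemma less_darrow_iff:
  "x < y \<longleftrightarrow> coord x < coord y \<or> (coord x = coord y \<and> \<not> upper x \<and> upper y)"
  by (auto simp: less_darrow_def)

lemma less_eq_darrow_iff:
  "x \<le> y \<longleftrightarrow> coord x < coord y \<or> (coord x = coord y \<and> (upper x \<longrightarrow> upper y))"
  by (auto simp: less_eq_darrow_def darrow_eq_iff)

definition pt0 :: "real \<Rightarrow> darrow" where "pt0 a = Abs_darrow (a, False)"
definition pt1 :: "real \<Rightarrow> darrow" where "pt1 a = Abs_darrow (a, True)"

lemma pt0: "0 < a \<Longrightarrow> a \<le> 1 \<Longrightarrow> coord (pt0 a) = a \<and> \<not> upper (pt0 a)"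
  unfolding pt0_def by (simp add: Abs_darrow_inverse)

lemma pt1: "0 \<le> a \<Longrightarrow> a < 1 \<Longrightarrow> coord (pt1 a) = a \<and> upper (pt1 a)"
  unfolding pt1_def by (simp add: Abs_darrow_inverse)

lemma open_atLeast_upper:
  assumes "upper p"
  shows "open {p..}"
proof (cases "coord p = 0")
  case True
  then have "p \<le> x" for x
    using assms darrow_cases[of x] by (auto simp: less_eq_darrow_iff)
  then have "{p..} = UNIV" by auto
  then show ?thesis by simp
next
  case False
  then have "{p..} = {pt0 (coord p)<..}"
    using assms darrow_cases[of p] pt0[of "coord p"] by (auto simp: less_eq_darrow_iff less_darrow_iff)
  then show ?thesis by simp
qed

lemma open_atMost_lower:
  assumes "\<not> upper p"
  shows "open {..p}"
proof (cases "coord p = 1")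
  case True
  then have "x \<le> p" for x
    using assms darrow_cases[of x] by (auto simp: less_eq_darrow_iff)
  then have "{..p} = UNIV" by auto
  then show ?thesis by simp
next
  case False
  then have "{..p} = {..<pt1 (coord p)}"
    using assms darrow_cases[of p] pt1[of "coord p"] by (auto simp: less_eq_darrow_iff less_darrow_iff)
  then show ?thesis by simp
qed

lemma clopen_interval_atLeastAtMost:
  assumes "upper p" "\<not> upper q" "p \<le> q"
  shows "clopen_interval {p..q}"
proof -
  have "open {p..q}"
    using open_atLeast_upper[OF assms(1)] open_atMost_lower[OF assms(2)]
    by (simp add: atLeastAtMost_def open_Int)
  then show ?thesis
    using assms(3) unfolding clopen_interval_def by auto
qed

lemma open_contains_less:
  assumes "\<not> upper x" "open U" "x \<in> U"
  shows "\<exists>z\<in>U. z < x"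
proof -
  have x: "0 < coord x" "coord x \<le> 1"
    using assms(1) darrow_cases[of x] by auto
  have "pt0 (coord x / 2) < x"
    using pt0[of "coord x / 2"] x by (auto simp: less_darrow_iff)
  then obtain b where b: "b < x" "{b<..x} \<subseteq> U"
    using open_left[OF assms(2,3)] by blast
  have "0 \<le> coord b" "coord b < coord x"
    using b(1) assms(1) darrow_cases[of b] by (auto simp: less_darrow_iff)
  then have "b < pt0 ((coord b + coord x) / 2)" "pt0 ((coord b + coord x) / 2) < x"
    using pt0[of "(coord b + coord x) / 2"] x by (auto simp: less_darrow_iff)
  then show ?thesis
    using b(2) by (meson greaterThanAtMost_iff less_imp_le subsetD)
qed

lemma open_contains_greater:
  assumes "upper x" "open U" "x \<in> U"
  shows "\<exists>z\<in>U. x < z"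
proof -
  have x: "0 \<le> coord x" "coord x < 1"
    using assms(1) darrow_cases[of x] by auto
  have "x < pt1 ((coord x + 1) / 2)"
    using pt1[of "(coord x + 1) / 2"] x by (auto simp: less_darrow_iff)
  then obtain b where b: "x < b" "{x..<b} \<subseteq> U"
    using open_right[OF assms(2,3)] by blast
  have "coord x < coord b" "coord b \<le> 1"
    using b(1) assms(1) darrow_cases[of b] by (auto simp: less_darrow_iff)
  then have "x < pt1 ((coord b + coord x) / 2)" "pt1 ((coord b + coord x) / 2) < b"
    using pt1[of "(coord b + coord x) / 2"] x by (auto simp: less_darrow_iff)
  then show ?thesis
    using b(2) by (meson atLeastLessThan_iff less_imp_le subsetD)
qed

lemma monotone_continuous_collapse_across_coords:
  fixes h :: "darrow \<Rightarrow> darrow"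
  assumes mono: "mono h \<or> antimono h" and cont: "continuous_on UNIV h"
    and "x < y" "h x = h y"
  shows "\<exists>u v. coord u < coord v \<and> h u = h v"
proof (cases "coord x < coord y")
  case True
  then show ?thesis using assms(4) by blast
next
  case False
  then have twins: "\<not> upper x" "upper y" "coord x = coord y"
    using \<open>x < y\<close> by (auto simp: less_darrow_iff)
  have outer: "\<exists>z. (z < x \<or> y < z) \<and> h z = h x"
  proof (cases "upper (h x)")
    case True
    then have U: "open (h -` {h x..})"
      using open_vimage[OF open_atLeast_upper cont] by blast
    show ?thesis
    proof (cases "mono h")
      case True
      obtain z where "z < x" "h x \<le> h z"
        using open_contains_less[OF twins(1) U] by auto
      then show ?thesis using True by (metis monoD order_antisym order_less_imp_le)
    next
      case False
      obtain z where "y < z" "h x \<le> h z"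
        using open_contains_greater[OF twins(2) U] assms(4) by auto
      then show ?thesis using False mono assms(4) by (metis antimonoD order_antisym order_less_imp_le)
    qed
  next
    case False
    then have U: "open (h -` {..h x})"
      using open_vimage[OF open_atMost_lower cont] by blast
    show ?thesis
    proof (cases "mono h")
      case True
      obtain z where "y < z" "h z \<le> h x"
        using open_contains_greater[OF twins(2) U] assms(4) by auto
      then show ?thesis using True assms(4) by (metis monoD order_antisym order_less_imp_le)
    next
      case False
      obtain z where "z < x" "h z \<le> h x"
        using open_contains_less[OF twins(1) U] by auto
      then show ?thesis using False mono by (metis antimonoD order_antisym order_less_imp_le)
    qed
  qed
  then obtain z where "z < x \<or> y < z" "h z = h x" by blast
  moreover from this(1) have "coord z \<noteq> coord x"
    using twins by (auto simp: less_darrow_iff)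
  ultimately show ?thesis
    by (metis linorder_neq_iff)
qed

lemma monotone_constant_between:
  fixes h :: "'a::order \<Rightarrow> 'b::order"
  assumes "mono h \<or> antimono h" "h x = h y"
  shows "\<forall>j\<in>{x..y}. h j = h x"
  using assms by (metis antimonoD atLeastAtMost_iff monoD order_antisym)

theorem proposition2p2:
  fixes h :: "darrow \<Rightarrow> darrow"
  assumes "mono h \<or> antimono h"
    and "continuous_on UNIV h"
  shows "\<exists>J. clopen_interval J \<and>
           ((\<exists>c. \<forall>x\<in>J. h x = c) \<or>
            strict_mono_on J h \<or> monotone_on J (<) (>) h)"
proof (cases "\<exists>x y. coord x < coord y \<and> h x = h y")
  case True
  then obtain x y where xy: "coord x < coord y" "h x = h y" by blast
  define J where "J = {pt1 (coord x)..pt0 (coord y)}"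
  have "0 \<le> coord x" "coord y \<le> 1"
    using darrow_cases[of x] darrow_cases[of y] by auto
  then have ends: "upper (pt1 (coord x))" "\<not> upper (pt0 (coord y))"
    "x \<le> pt1 (coord x)" "pt1 (coord x) \<le> pt0 (coord y)" "pt0 (coord y) \<le> y"
    using pt1[of "coord x"] pt0[of "coord y"] xy(1) by (auto simp: less_eq_darrow_iff)
  then have "clopen_interval J" "J \<subseteq> {x..y}"
    unfolding J_def using clopen_interval_atLeastAtMost by auto
  moreover have "\<forall>j\<in>{x..y}. h j = h x"
    using monotone_constant_between[OF assms(1) xy(2)] .
  ultimately show ?thesis by blast
next
  case False
  then have "inj h"
    using monotone_continuous_collapse_across_coords[OF assms] by (metis injI linorder_neq_iff)
  then have "strict_mono_on UNIV h \<or> monotone_on UNIV (<) (>) h"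
    using assms(1) mono_imp_strict_mono antimono_imp_strict_antimono by blast
  moreover have "clopen_interval UNIV"
    unfolding clopen_interval_def by auto
  ultimately show ?thesis by blast
qed

end
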